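(* (a) The following are equivalent: $j(0)=0$; $F(0)=0$; $0\in X_+$; the system $w'(t)=q(v(t))w(t)$, $v'(t)=j(w_t,v_t)-\mu v(t)$, $(w,v)_0=(\varphi,\psi)$ has a zero solution. In either case $X_+\neq\emptyset$. If $j|_{U_+}$ is $C$-continuous at zero, then $F|_{U_+}$ is $C$-continuous at zero. Hence, if $j(0)=0$ and $j|_{U_+}$ is $C$-continuous at zero, then: for $\phi\in X_+$, if $x^\phi_t\to0$ in $C$ then $x^\phi_t\to0$ in $C^1$; if zero is globally attractive in $C$ it is so in $C^1$; for $E\subset X_+$, if zero is stable on $E$ in $C$ then also in $C^1$; and if zero is globally asymptotically stable in $C$ then also in $C^1$. If $j(0)=0$ and $$\forall\,\varepsilon>0\;\exists\,\delta>0\ \text{such that}\ j(\varphi,\psi)\le\varepsilon\ \ \forall\,(\varphi,\psi)\in U_+\ \text{with}\ \|\varphi\|_0\le\delta ,$$ then also: (b) Let $E\subset X_+$ with $0\in E$, and suppose $\|w^{(\varphi,\psi)}_t\|_0\le\|\varphi\|_0$ for all $(\varphi,\psi)\in E$, $t\ge0$. Then zero is stable on $E$ in $C$ and in $C^1$. (c) Let $\phi\in X_+$ and suppose that for $(w,v)=(w,v)^\phi$ one has $w(t)\to0$ as $t\to\infty$. Then $(w,v)_t\to0$ in $C$ and in $C^1$. In particular, if $w\to0$ for all initial data in $X_+$, then zero is globally attractive in both norms.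
   Context: Let $h>0$, $R_-<0$, $I=(R_-,\infty)$, $q:I\to\mathbb{R}$, $\mu>0$, $U=C^1([-h,0],\mathbb{R})\times C^1([-h,0],I)$, $j:U\to\mathbb{R}$, $U_+=C^1([-h,0],\mathbb{R}_+^2)$, $\|\cdot\|_0$ the sup-norm, $\|\phi\|_1=\|\phi\|_0+\|\phi'\|_0$; $x_t(s)=x(t+s)$. Define $F(\varphi,\psi)=(q(\psi(0))\varphi(0),\,j(\varphi,\psi)-\mu\psi(0))$ and $X_+=\{\phi\in C^1([-h,0],\mathbb{R}_+^2):\phi'(0)=F(\phi)\}$. Assume: $j$ is $C^1$ on $U$ with each derivative extending to a linear map on $C([-h,0],\mathbb{R}^2)$ depending continuously on $(\phi,\chi)$; for every bounded $B\subset U_+$ there is $L_B$ with $|j(\phi)-j(\chi)|\le L_B\|\phi-\chi\|_0$ on $B$; $j\ge0$ on $U_+$; $j(B_1\times B_2)$ is bounded whenever $B_1\times B_2\subset U_+$ with $B_1$ bounded; $q$ is bounded and $C^1$. Solutions from $X_+$ exist globally, stay in $X_+$ and define a continuous semiflow. Zero is stable on $E$ if for every $\varepsilon>0$ there is $\delta>0$ with $\|x^\phi_t\|<\varepsilon$ for all $t\ge0$ whenever $\phi\in E$, $\|\phi\|<\delta$. *)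

theory Defs
  imports "HOL-Analysis.Analysis"
begin

text \<open>States (phi, psi) are pairs of real functions; only their values on [-h,0] matter.\<close>
type_synonym st = "(real \<Rightarrow> real) \<times> (real \<Rightarrow> real)"

definition C1on :: "real \<Rightarrow> (real \<Rightarrow> real) \<Rightarrow> bool" where
  "C1on h f \<longleftrightarrow> (\<exists>f'. continuous_on {-h..0} f' \<and>
      (\<forall>s\<in>{-h..0}. (f has_real_derivative f' s) (at s within {-h..0})))"

definition contst :: "real \<Rightarrow> st \<Rightarrow> bool" where
  "contst h p \<longleftrightarrow> continuous_on {-h..0} (fst p) \<and> continuous_on {-h..0} (snd p)"

definition C1st :: "real \<Rightarrow> st \<Rightarrow> bool" where
  "C1st h p \<longleftrightarrow> C1on h (fst p) \<and> C1on h (snd p)"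

definition dr :: "real \<Rightarrow> (real \<Rightarrow> real) \<Rightarrow> real \<Rightarrow> real" where
  "dr h f s = vector_derivative f (at s within {-h..0})"

definition n0 :: "real \<Rightarrow> (real \<Rightarrow> real) \<Rightarrow> real" where
  "n0 h f = Sup ((\<lambda>s. \<bar>f s\<bar>) ` {-h..0})"

definition n1 :: "real \<Rightarrow> (real \<Rightarrow> real) \<Rightarrow> real" where
  "n1 h f = n0 h f + n0 h (dr h f)"

definition N0 :: "real \<Rightarrow> st \<Rightarrow> real" where
  "N0 h p = Sup ((\<lambda>s. norm (fst p s, snd p s)) ` {-h..0})"

definition N1 :: "real \<Rightarrow> st \<Rightarrow> real" where
  "N1 h p = N0 h p + N0 h (dr h (fst p), dr h (snd p))"

definition zst :: st where "zst = (\<lambda>_. 0, \<lambda>_. 0)"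

definition padd :: "st \<Rightarrow> st \<Rightarrow> st" where
  "padd p r = (\<lambda>s. fst p s + fst r s, \<lambda>s. snd p s + snd r s)"

definition psub :: "st \<Rightarrow> st \<Rightarrow> st" where
  "psub p r = (\<lambda>s. fst p s - fst r s, \<lambda>s. snd p s - snd r s)"

definition pscale :: "real \<Rightarrow> st \<Rightarrow> st" where
  "pscale a p = (\<lambda>s. a * fst p s, \<lambda>s. a * snd p s)"

definition seg :: "st \<Rightarrow> real \<Rightarrow> st" where
  "seg x t = (\<lambda>s. fst x (t + s), \<lambda>s. snd x (t + s))"

definition Uset :: "real \<Rightarrow> real \<Rightarrow> st set" where
  "Uset h Rm = {p. C1st h p \<and> (\<forall>s\<in>{-h..0}. snd p s > Rm)}"

definition Uplus :: "real \<Rightarrow> st set" where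
  "Uplus h = {p. C1st h p \<and> (\<forall>s\<in>{-h..0}. fst p s \<ge> 0 \<and> snd p s \<ge> 0)}"

definition Fmap :: "(real \<Rightarrow> real) \<Rightarrow> (st \<Rightarrow> real) \<Rightarrow> real \<Rightarrow> st \<Rightarrow> real \<times> real" where
  "Fmap q j mu p = (q (snd p 0) * fst p 0, j p - mu * snd p 0)"

definition Xplus :: "real \<Rightarrow> (real \<Rightarrow> real) \<Rightarrow> (st \<Rightarrow> real) \<Rightarrow> real \<Rightarrow> st set" where
  "Xplus h q j mu = {p \<in> Uplus h. (dr h (fst p) 0, dr h (snd p) 0) = Fmap q j mu p}"

text \<open>j is C^1 on U (Frechet w.r.t. the C^1 norm, derivative continuous in operator norm),
  each derivative Dj p extends to a linear map on C([-h,0],R^2), and (p,chi) |-> Dj p chi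
  is continuous on U x C.\<close>
definition jC1 :: "real \<Rightarrow> real \<Rightarrow> (st \<Rightarrow> real) \<Rightarrow> (st \<Rightarrow> st \<Rightarrow> real) \<Rightarrow> bool" where
  "jC1 h Rm j Dj \<longleftrightarrow>
    (\<forall>p\<in>Uset h Rm. \<forall>a b c1 c2. contst h c1 \<and> contst h c2 \<longrightarrow>
        Dj p (padd (pscale a c1) (pscale b c2)) = a * Dj p c1 + b * Dj p c2)
  \<and> (\<forall>p\<in>Uset h Rm. \<forall>c r. (\<forall>s\<in>{-h..0}. fst c s = fst r s \<and> snd c s = snd r s) \<longrightarrow> Dj p c = Dj p r)
  \<and> (\<forall>p\<in>Uset h Rm. \<forall>\<epsilon>>0. \<exists>\<delta>>0. \<forall>c. C1st h c \<and> padd p c \<in> Uset h Rm \<and> N1 h c < \<delta> \<longrightarrow>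
        \<bar>j (padd p c) - j p - Dj p c\<bar> \<le> \<epsilon> * N1 h c)
  \<and> (\<forall>p\<in>Uset h Rm. \<forall>\<epsilon>>0. \<exists>\<delta>>0. \<forall>r\<in>Uset h Rm. N1 h (psub r p) < \<delta> \<longrightarrow>
        (\<forall>c. C1st h c \<longrightarrow> \<bar>Dj r c - Dj p c\<bar> \<le> \<epsilon> * N1 h c))
  \<and> (\<forall>p\<in>Uset h Rm. \<forall>c. contst h c \<longrightarrow> (\<forall>\<epsilon>>0. \<exists>\<delta>>0. \<forall>r\<in>Uset h Rm. \<forall>e.
        contst h e \<and> N1 h (psub r p) < \<delta> \<and> N0 h (psub e c) < \<delta> \<longrightarrow> \<bar>Dj r e - Dj p c\<bar> < \<epsilon>))"

definition j_hyps :: "real \<Rightarrow> real \<Rightarrow> (st \<Rightarrow> real) \<Rightarrow> bool" where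
  "j_hyps h Rm j \<longleftrightarrow>
    (\<forall>p r. (\<forall>s\<in>{-h..0}. fst p s = fst r s \<and> snd p s = snd r s) \<longrightarrow> j p = j r)
  \<and> (\<exists>Dj. jC1 h Rm j Dj)
  \<and> (\<forall>B \<subseteq> Uplus h. (\<exists>M. \<forall>p\<in>B. N1 h p \<le> M) \<longrightarrow>
        (\<exists>L. \<forall>p\<in>B. \<forall>r\<in>B. \<bar>j p - j r\<bar> \<le> L * N0 h (psub p r)))
  \<and> (\<forall>p\<in>Uplus h. j p \<ge> 0)
  \<and> (\<forall>B1 B2. B1 \<times> B2 \<subseteq> Uplus h \<longrightarrow> (\<exists>M. \<forall>f\<in>B1. n1 h f \<le> M) \<longrightarrow>
        (\<exists>K. \<forall>p\<in>B1 \<times> B2. \<bar>j p\<bar> \<le> K))"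

definition q_hyps :: "real \<Rightarrow> (real \<Rightarrow> real) \<Rightarrow> bool" where
  "q_hyps Rm q \<longleftrightarrow> (\<exists>M. \<forall>x>Rm. \<bar>q x\<bar> \<le> M) \<and>
     (\<exists>q'. continuous_on {Rm<..} q' \<and> (\<forall>x>Rm. (q has_real_derivative q' x) (at x)))"

definition is_sol :: "real \<Rightarrow> real \<Rightarrow> (real \<Rightarrow> real) \<Rightarrow> (st \<Rightarrow> real) \<Rightarrow> real \<Rightarrow> st \<Rightarrow> st \<Rightarrow> bool" where
  "is_sol h Rm q j mu p x \<longleftrightarrow>
    (\<forall>s\<in>{-h..0}. fst x s = fst p s \<and> snd x s = snd p s)
  \<and> (\<forall>t\<ge>-h. snd x t > Rm)
  \<and> (\<exists>w' v'. continuous_on {-h..} w' \<and> continuous_on {-h..} v' \<and>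
      (\<forall>t\<ge>-h. (fst x has_real_derivative w' t) (at t within {-h..}) \<and>
               (snd x has_real_derivative v' t) (at t within {-h..})) \<and>
      (\<forall>t\<ge>0. w' t = q (snd x t) * fst x t \<and> v' t = j (seg x t) - mu * snd x t))"

definition semiflow_hyps :: "real \<Rightarrow> real \<Rightarrow> (real \<Rightarrow> real) \<Rightarrow> (st \<Rightarrow> real) \<Rightarrow> real \<Rightarrow> (st \<Rightarrow> st) \<Rightarrow> bool" where
  "semiflow_hyps h Rm q j mu sol \<longleftrightarrow>
    (\<forall>p\<in>Xplus h q j mu. is_sol h Rm q j mu p (sol p) \<and> (\<forall>t\<ge>0. seg (sol p) t \<in> Xplus h q j mu))
  \<and> (\<forall>p\<in>Xplus h q j mu. \<forall>x. is_sol h Rm q j mu p x \<longrightarrow>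
        (\<forall>t\<ge>-h. fst x t = fst (sol p) t \<and> snd x t = snd (sol p) t))
  \<and> (\<forall>t0\<ge>0. \<forall>p\<in>Xplus h q j mu. \<forall>\<epsilon>>0. \<exists>\<delta>>0. \<forall>t\<ge>0. \<forall>r\<in>Xplus h q j mu.
        \<bar>t - t0\<bar> < \<delta> \<and> N1 h (psub r p) < \<delta> \<longrightarrow> N1 h (psub (seg (sol r) t) (seg (sol p) t0)) < \<epsilon>)"

text \<open>Dynamical notions, w.r.t. a norm N (N0 h for C, N1 h for C^1).\<close>
definition stable_on :: "(st \<Rightarrow> real) \<Rightarrow> (st \<Rightarrow> st) \<Rightarrow> st set \<Rightarrow> bool" where
  "stable_on N sol E \<longleftrightarrow> (\<forall>\<epsilon>>0. \<exists>\<delta>>0. \<forall>p\<in>E. N p < \<delta> \<longrightarrow> (\<forall>t\<ge>0. N (seg (sol p) t) < \<epsilon>))"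

definition conv_zero :: "(st \<Rightarrow> real) \<Rightarrow> (st \<Rightarrow> st) \<Rightarrow> st \<Rightarrow> bool" where
  "conv_zero N sol p \<longleftrightarrow> ((\<lambda>t. N (seg (sol p) t)) \<longlongrightarrow> 0) at_top"

definition glob_attr :: "(st \<Rightarrow> real) \<Rightarrow> (st \<Rightarrow> st) \<Rightarrow> st set \<Rightarrow> bool" where
  "glob_attr N sol X \<longleftrightarrow> (\<forall>p\<in>X. conv_zero N sol p)"

definition GAS :: "(st \<Rightarrow> real) \<Rightarrow> (st \<Rightarrow> st) \<Rightarrow> st set \<Rightarrow> bool" where
  "GAS N sol X \<longleftrightarrow> stable_on N sol X \<and> glob_attr N sol X"

definition j_Ccont0 :: "real \<Rightarrow> (st \<Rightarrow> real) \<Rightarrow> bool" where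
  "j_Ccont0 h j \<longleftrightarrow> (\<forall>\<epsilon>>0. \<exists>\<delta>>0. \<forall>p\<in>Uplus h. N0 h p < \<delta> \<longrightarrow> \<bar>j p - j zst\<bar> < \<epsilon>)"

definition F_Ccont0 :: "real \<Rightarrow> (real \<Rightarrow> real) \<Rightarrow> (st \<Rightarrow> real) \<Rightarrow> real \<Rightarrow> bool" where
  "F_Ccont0 h q j mu \<longleftrightarrow> (\<forall>\<epsilon>>0. \<exists>\<delta>>0. \<forall>p\<in>Uplus h. N0 h p < \<delta> \<longrightarrow>
      norm (Fmap q j mu p - Fmap q j mu zst) < \<epsilon>)"

end

theory Submission
  imports Defs
begin

text \<open>To pass from C to C^1:
  along a solution, the derivative of the segment x_t at s is F(x_{t+s}) once t + s \<ge> 0, and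
  |F(x_u)| \<le> M |w(u)| + |j(x_u)| + mu |v(u)| for a bound M of q. Hence the C^1 norm of x_t is
  controlled by the sizes of w, v and j(x_u) on [t - h, t], and, while t < h, by the C^1 norm of
  the initial state. In (a), C-continuity of j at zero makes j(x_u) small whenever x_u is small
  in C. In (b) and (c) only w is known to be small; then j(x_u) \<le> c by hypothesis, and the
  differential inequality v' \<le> c - mu v gives v(u) \<le> c/mu + (v(T) - c/mu) e^(-mu (u - T)),
  so v becomes small as well.\<close>

section \<open>Functions on [-h, 0] and their norms\<close>

lemma dr_eqI:
  assumes "h > 0" "s \<in> {-h..0}" "(f has_real_derivative d) (at s within {-h..0})"
  shows "dr h f s = d"
  unfolding dr_def
  using vector_derivative_within_cbox[of "-h" 0 s f d] assms
  by (simp add: has_real_derivative_iff_has_vector_derivative)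

lemma C1on_continuous_on:
  assumes "h > 0" "C1on h f"
  shows "continuous_on {-h..0} f" "continuous_on {-h..0} (dr h f)"
proof -
  obtain f' where f'_cont: "continuous_on {-h..0} f'"
    and f'_deriv: "\<forall>s\<in>{-h..0}. (f has_real_derivative f' s) (at s within {-h..0})"
    using assms(2) unfolding C1on_def by blast
  show "continuous_on {-h..0} f"
    by (rule continuous_on_vector_derivative)
       (use f'_deriv in \<open>auto simp: has_real_derivative_iff_has_vector_derivative\<close>)
  have "\<forall>s\<in>{-h..0}. dr h f s = f' s"
    using f'_deriv dr_eqI[OF assms(1)] by blast
  then show "continuous_on {-h..0} (dr h f)"
    using continuous_on_eq[OF f'_cont] by auto
qed

lemma C1st_contst:
  assumes "h > 0" "C1st h p"
  shows "contst h p" "contst h (dr h (fst p), dr h (snd p))"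
  using assms C1on_continuous_on unfolding C1st_def contst_def by auto

lemma n0_leI:
  assumes "h \<ge> 0" "\<forall>s\<in>{-h..0}. \<bar>f s\<bar> \<le> A"
  shows "n0 h f \<le> A"
  unfolding n0_def using assms by (intro cSup_least) auto

lemma N0_leI:
  assumes "h \<ge> 0" "\<forall>s\<in>{-h..0}. norm (fst p s, snd p s) \<le> A"
  shows "N0 h p \<le> A"
  unfolding N0_def using assms by (intro cSup_least) auto

lemma abs_le_n0:
  assumes "continuous_on {-h..0} f" "s \<in> {-h..0}"
  shows "\<bar>f s\<bar> \<le> n0 h f"
proof -
  have "continuous_on {-h..0} (\<lambda>s. \<bar>f s\<bar>)"
    using assms by (intro continuous_intros)
  then have "bdd_above ((\<lambda>s. \<bar>f s\<bar>) ` {-h..0})"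
    by (intro bounded_imp_bdd_above compact_imp_bounded compact_continuous_image) auto
  then show ?thesis
    unfolding n0_def using assms(2) by (intro cSup_upper) auto
qed

lemma norm_le_N0:
  assumes "contst h p" "s \<in> {-h..0}"
  shows "norm (fst p s, snd p s) \<le> N0 h p"
proof -
  have "continuous_on {-h..0} (\<lambda>s. norm (fst p s, snd p s))"
    using assms(1) unfolding contst_def by (intro continuous_intros) auto
  then have "bdd_above ((\<lambda>s. norm (fst p s, snd p s)) ` {-h..0})"
    by (intro bounded_imp_bdd_above compact_imp_bounded compact_continuous_image) auto
  then show ?thesis
    unfolding N0_def using assms(2) by (intro cSup_upper) auto
qed

lemma abs_le_N0:
  assumes "contst h p" "s \<in> {-h..0}"
  shows "\<bar>fst p s\<bar> \<le> N0 h p" "\<bar>snd p s\<bar> \<le> N0 h p"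
  using norm_le_N0[OF assms] norm_fst_le[of "fst p s" "snd p s"] norm_snd_le[of "snd p s" "fst p s"]
  by simp_all

lemma N0_nonneg:
  assumes "h \<ge> 0" "contst h p"
  shows "0 \<le> N0 h p"
proof -
  have "norm (fst p 0, snd p 0) \<le> N0 h p"
    using norm_le_N0[OF assms(2)] assms(1) by simp
  then show ?thesis using norm_ge_zero order_trans by blast
qed

lemma n0_fst_le_N0:
  assumes "h \<ge> 0" "contst h p"
  shows "n0 h (fst p) \<le> N0 h p"
  using abs_le_N0(1)[OF assms(2)] assms(1) by (intro n0_leI) auto

lemma N0_le_N1:
  assumes "h > 0" "C1st h p"
  shows "N0 h p \<le> N1 h p"
  using N0_nonneg[of h "(dr h (fst p), dr h (snd p))"] C1st_contst[OF assms] assms(1)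
  unfolding N1_def by simp

lemma norm_dr_le_N1:
  assumes "h > 0" "C1st h p" "s \<in> {-h..0}"
  shows "norm (dr h (fst p) s, dr h (snd p) s) \<le> N1 h p"
  using norm_le_N0[OF C1st_contst(2)[OF assms(1,2)] assms(3)]
    N0_nonneg[OF _ C1st_contst(1)[OF assms(1,2)]] assms(1)
  unfolding N1_def by simp

lemma dr_eq_shifted_derivative:
  assumes h: "h > 0" and t: "t \<ge> 0" and s: "s \<in> {-h..0}"
    and deriv: "(f has_real_derivative d) (at (t+s) within {-h..})"
    and eq: "\<forall>r\<in>{-h..0}. g r = f (t+r)"
  shows "dr h g s = d"
proof -
  have "(f has_real_derivative d) (at ((+) t s) within (+) t ` {-h..0})"
    by (rule has_field_derivative_subset[OF deriv]) (use t in auto)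
  moreover have "((+) t has_real_derivative 1) (at s within {-h..0})"
    by (auto intro!: derivative_eq_intros)
  ultimately have "(f \<circ> (+) t has_real_derivative d * 1) (at s within {-h..0})"
    by (rule DERIV_image_chain)
  then have "(f \<circ> (+) t has_real_derivative d) (at s within {-h..0})"
    by simp
  then have "(g has_real_derivative d) (at s within {-h..0})"
  proof (rule has_field_derivative_transform_within[where d=1])
    show "s \<in> {-h..0}" by (rule s)
    show "(1::real) > 0" by simp
    show "(f \<circ> (+) t) r = g r" if "r \<in> {-h..0}" for r
      using eq that by simp
  qed
  then show ?thesis using dr_eqI[OF h s] by simp
qed

lemma Uplus_contst: "h > 0 \<Longrightarrow> p \<in> Uplus h \<Longrightarrow> contst h p"
  using C1st_contst(1) by (simp add: Uplus_def)

lemma Uplus_N0_le_N1: "h > 0 \<Longrightarrow> p \<in> Uplus h \<Longrightarrow> N0 h p \<le> N1 h p"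
  using N0_le_N1 by (simp add: Uplus_def)

lemma Uplus_N0_nonneg: "h > 0 \<Longrightarrow> p \<in> Uplus h \<Longrightarrow> 0 \<le> N0 h p"
  using N0_nonneg Uplus_contst less_imp_le by blast

section \<open>Linear differential inequalities\<close>

lemma linear_differential_inequality:
  fixes v v' :: "real \<Rightarrow> real"
  assumes mu: "mu > 0"
    and deriv: "\<And>y. y \<ge> T \<Longrightarrow> (v has_real_derivative v' y) (at y)"
    and ineq: "\<And>y. y \<ge> T \<Longrightarrow> v' y \<le> c - mu * v y"
    and u: "u \<ge> T"
  shows "v u \<le> c/mu + (v T - c/mu) * exp (-(mu*(u-T)))"
proof -
  define g where "g y = (v y - c/mu) * exp (mu*y)" for y
  have "g u \<le> g T"
  proof (rule DERIV_nonpos_imp_nonincreasing[OF u])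
    fix y assume y: "T \<le> y" "y \<le> u"
    have "(g has_real_derivative (v' y + mu * v y - c) * exp (mu*y)) (at y)"
      unfolding g_def using deriv[OF y(1)] mu
      by (auto intro!: derivative_eq_intros simp: field_simps)
    moreover have "(v' y + mu * v y - c) * exp (mu*y) \<le> 0"
      using ineq[OF y(1)] by (intro mult_nonpos_nonneg) auto
    ultimately show "\<exists>z. (g has_real_derivative z) (at y) \<and> z \<le> 0" by blast
  qed
  then have "(v u - c/mu) * exp (mu*u) * exp (-(mu*u)) \<le> (v T - c/mu) * exp (mu*T) * exp (-(mu*u))"
    unfolding g_def by (intro mult_right_mono) auto
  then show ?thesis
    by (simp add: mult.assoc exp_minus_inverse flip: exp_add) (simp add: algebra_simps)
qed

lemma exp_linear_decay:
  fixes mu T :: real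
  assumes mu: "mu > 0"
  shows "((\<lambda>u. exp (-(mu*(u-T)))) \<longlongrightarrow> 0) at_top"
proof -
  have "filterlim (\<lambda>u. u - T) at_top at_top"
    using filterlim_tendsto_add_at_top[OF tendsto_const[of "-T"] filterlim_ident] by simp
  then have "filterlim (\<lambda>u. mu * (u - T)) at_top at_top"
    by (rule filterlim_tendsto_pos_mult_at_top[OF tendsto_const mu])
  then have "filterlim (\<lambda>u. -(mu * (u - T))) at_bot at_top"
    by (simp add: filterlim_uminus_at_bot)
  then show ?thesis
    by (rule filterlim_compose[OF exp_at_bot])
qed

section \<open>The zero state and the vector field\<close>

lemma Fmap_zst: "Fmap q j mu zst = (0, j zst)"
  by (simp add: Fmap_def zst_def)

lemma seg_zst: "seg zst t = zst"
  by (simp add: seg_def zst_def)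

lemma zst_in_Uplus: "zst \<in> Uplus h"
proof -
  have "C1on h (\<lambda>_. 0)"
    unfolding C1on_def by (rule exI[of _ "\<lambda>_. 0"]) auto
  then show ?thesis by (simp add: Uplus_def C1st_def zst_def)
qed

lemma dr_const:
  assumes "h > 0" "s \<in> {-h..0}"
  shows "dr h (\<lambda>_. c) s = 0"
  using assms by (intro dr_eqI) auto

lemma zst_in_Xplus_iff:
  assumes "h > 0"
  shows "zst \<in> Xplus h q j mu \<longleftrightarrow> j zst = 0"
  using assms zst_in_Uplus dr_const[OF assms, of 0]
  by (simp add: Xplus_def Fmap_zst) (simp add: zst_def)

lemma is_sol_zst_iff:
  assumes h: "h > 0" and Rm: "Rm < 0"
  shows "is_sol h Rm q j mu zst zst \<longleftrightarrow> j zst = 0"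
proof
  assume "is_sol h Rm q j mu zst zst"
  then obtain v' where v'_deriv: "\<forall>t\<ge>-h. (snd zst has_real_derivative v' t) (at t within {-h..})"
    and v'_eq: "\<forall>t\<ge>0. v' t = j (seg zst t) - mu * snd zst t"
    unfolding is_sol_def by blast
  have "(snd zst has_real_derivative v' 0) (at 0 within {-h..})"
    using v'_deriv h by simp
  then have "(snd zst has_real_derivative v' 0) (at 0 within {-h..0})"
    by (rule has_field_derivative_subset) auto
  then have "v' 0 = dr h (\<lambda>_. 0) 0"
    using h by (simp add: dr_eqI zst_def)
  then have "v' 0 = 0"
    using dr_const[OF h] h by simp
  then show "j zst = 0" using v'_eq by (simp add: seg_zst) (simp add: zst_def)
next
  assume "j zst = 0"
  then show "is_sol h Rm q j mu zst zst"
    unfolding is_sol_def seg_zst using Rm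
    by (intro conjI exI[of _ "\<lambda>_. 0"]) (auto simp: zst_def)
qed

lemma F_Ccont0_if_j_Ccont0:
  assumes h: "h > 0" and Rm: "Rm < 0" and q_bounded: "\<forall>y>Rm. \<bar>q y\<bar> \<le> M"
    and j_cont: "j_Ccont0 h j"
  shows "F_Ccont0 h q j mu"
  unfolding F_Ccont0_def
proof (intro allI impI)
  fix e :: real assume e: "e > 0"
  have M: "M \<ge> 0" using q_bounded Rm by (meson abs_ge_zero order_trans)
  define K where "K = M + \<bar>mu\<bar> + 1"
  have K: "K > 0" using M by (simp add: K_def)
  obtain d where d: "d > 0" and d_j: "\<forall>p\<in>Uplus h. N0 h p < d \<longrightarrow> \<bar>j p - j zst\<bar> < e/2"
    using j_cont e unfolding j_Ccont0_def by (meson half_gt_zero)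
  define \<delta> where "\<delta> = min d (e / (2*K))"
  show "\<exists>\<delta>>0. \<forall>p\<in>Uplus h. N0 h p < \<delta> \<longrightarrow> norm (Fmap q j mu p - Fmap q j mu zst) < e"
  proof (intro exI[of _ \<delta>] conjI ballI impI)
    show "\<delta> > 0" using d e K by (simp add: \<delta>_def)
    fix p assume p: "p \<in> Uplus h" and small: "N0 h p < \<delta>"
    have zero: "(0::real) \<in> {-h..0}" using h by simp
    have w: "\<bar>fst p 0\<bar> \<le> \<delta>" and v: "\<bar>snd p 0\<bar> \<le> \<delta>"
      using abs_le_N0[OF Uplus_contst[OF h p] zero] small by auto
    have "snd p 0 \<ge> 0" using p zero by (simp add: Uplus_def)
    then have q: "\<bar>q (snd p 0)\<bar> \<le> M" using q_bounded Rm by simp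
    have j: "\<bar>j p - j zst\<bar> < e/2" using d_j p small by (simp add: \<delta>_def)
    have "Fmap q j mu p - Fmap q j mu zst = (q (snd p 0) * fst p 0, j p - j zst - mu * snd p 0)"
      by (simp add: Fmap_zst) (simp add: Fmap_def)
    then have "norm (Fmap q j mu p - Fmap q j mu zst)
        \<le> \<bar>q (snd p 0) * fst p 0\<bar> + \<bar>j p - j zst - mu * snd p 0\<bar>"
      using norm_Pair_le[of "q (snd p 0) * fst p 0" "j p - j zst - mu * snd p 0"] by simp
    also have "\<dots> \<le> M * \<delta> + \<bar>j p - j zst\<bar> + \<bar>mu\<bar> * \<delta>"
    proof -
      have "\<bar>q (snd p 0) * fst p 0\<bar> \<le> M * \<delta>"
        unfolding abs_mult using mult_mono[OF q w M abs_ge_zero] .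
      moreover have "\<bar>mu * snd p 0\<bar> \<le> \<bar>mu\<bar> * \<delta>"
        unfolding abs_mult using v by (simp add: mult_left_mono)
      ultimately show ?thesis
        using abs_triangle_ineq4[of "j p - j zst" "mu * snd p 0"] by linarith
    qed
    also have "\<dots> < K * \<delta> + e/2"
      using j \<open>\<delta> > 0\<close> by (simp add: K_def algebra_simps)
    also have "K * \<delta> \<le> e/2"
      using K e by (simp add: \<delta>_def min_def field_simps)
    finally show "norm (Fmap q j mu p - Fmap q j mu zst) < e" by simp
  qed
qed

section \<open>Segments of solutions\<close>

locale delay_semiflow =
  fixes h Rm mu M :: real and q :: "real \<Rightarrow> real" and j :: "st \<Rightarrow> real" and sol :: "st \<Rightarrow> st"
  assumes h_pos: "h > 0" and Rm_neg: "Rm < 0" and mu_pos: "mu > 0"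
    and q_bounded: "\<forall>y>Rm. \<bar>q y\<bar> \<le> M"
    and j_nonneg: "\<forall>p\<in>Uplus h. 0 \<le> j p"
    and semiflow: "semiflow_hyps h Rm q j mu sol"
begin

lemma M_nonneg: "M \<ge> 0"
  using q_bounded Rm_neg by (meson abs_ge_zero order_trans)

lemma sol_is_sol: "p \<in> Xplus h q j mu \<Longrightarrow> is_sol h Rm q j mu p (sol p)"
  using semiflow unfolding semiflow_hyps_def by blast

lemma seg_sol_in_Xplus: "p \<in> Xplus h q j mu \<Longrightarrow> t \<ge> 0 \<Longrightarrow> seg (sol p) t \<in> Xplus h q j mu"
  using semiflow unfolding semiflow_hyps_def by blast

lemma Xplus_subset_Uplus: "Xplus h q j mu \<subseteq> Uplus h"
  unfolding Xplus_def by blast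

lemma seg_sol_in_Uplus: "p \<in> Xplus h q j mu \<Longrightarrow> t \<ge> 0 \<Longrightarrow> seg (sol p) t \<in> Uplus h"
  using seg_sol_in_Xplus Xplus_subset_Uplus by blast

lemma sol_init:
  assumes "p \<in> Xplus h q j mu" "s \<in> {-h..0}"
  shows "fst (sol p) s = fst p s" "snd (sol p) s = snd p s"
  using sol_is_sol[OF assms(1)] assms(2) unfolding is_sol_def by auto

lemma sol_at_eq_seg_at_0: "fst (sol p) t = fst (seg (sol p) t) 0" "snd (sol p) t = snd (seg (sol p) t) 0"
  by (simp_all add: seg_def)

lemma snd_sol_nonneg:
  assumes "p \<in> Xplus h q j mu" "t \<ge> 0"
  shows "0 \<le> snd (sol p) t"
  using seg_sol_in_Uplus[OF assms] h_pos unfolding sol_at_eq_seg_at_0 Uplus_def by auto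

lemma abs_sol_le_N0_seg:
  assumes "p \<in> Xplus h q j mu" "t \<ge> 0"
  shows "\<bar>fst (sol p) t\<bar> \<le> N0 h (seg (sol p) t)" "\<bar>snd (sol p) t\<bar> \<le> N0 h (seg (sol p) t)"
  using abs_le_N0[OF Uplus_contst[OF h_pos seg_sol_in_Uplus[OF assms]], of 0] h_pos
  unfolding sol_at_eq_seg_at_0 by auto

lemma abs_fst_sol_le_n0_seg:
  assumes "p \<in> Xplus h q j mu" "t \<ge> 0"
  shows "\<bar>fst (sol p) t\<bar> \<le> n0 h (fst (seg (sol p) t))"
  using abs_le_n0[of h "fst (seg (sol p) t)" 0] Uplus_contst[OF h_pos seg_sol_in_Uplus[OF assms]] h_pos
  unfolding sol_at_eq_seg_at_0 contst_def by auto

lemma sol_has_derivative: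
  assumes "p \<in> Xplus h q j mu"
  obtains w' v' where
    "\<And>u. u \<ge> -h \<Longrightarrow> (fst (sol p) has_real_derivative w' u) (at u within {-h..})"
    "\<And>u. u \<ge> -h \<Longrightarrow> (snd (sol p) has_real_derivative v' u) (at u within {-h..})"
    "\<And>u. u \<ge> 0 \<Longrightarrow> (w' u, v' u) = Fmap q j mu (seg (sol p) u)"
proof -
  from sol_is_sol[OF assms] obtain w' v' where
    deriv: "\<forall>u\<ge>-h. (fst (sol p) has_real_derivative w' u) (at u within {-h..}) \<and>
                   (snd (sol p) has_real_derivative v' u) (at u within {-h..})"
    and ode: "\<forall>u\<ge>0. w' u = q (snd (sol p) u) * fst (sol p) u \<and>
                   v' u = j (seg (sol p) u) - mu * snd (sol p) u"
    unfolding is_sol_def by blast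
  have "(w' u, v' u) = Fmap q j mu (seg (sol p) u)" if "u \<ge> 0" for u
    using ode that by (simp add: Fmap_def seg_def)
  with deriv that show thesis by blast
qed

lemma dr_seg_sol:
  assumes p: "p \<in> Xplus h q j mu" and t: "t \<ge> 0" and s: "s \<in> {-h..0}"
  shows "t + s < 0 \<Longrightarrow> (dr h (fst (seg (sol p) t)) s, dr h (snd (seg (sol p) t)) s)
           = (dr h (fst p) (t+s), dr h (snd p) (t+s))"
    and "t + s \<ge> 0 \<Longrightarrow> (dr h (fst (seg (sol p) t)) s, dr h (snd (seg (sol p) t)) s)
           = Fmap q j mu (seg (sol p) (t+s))"
proof -
  obtain w' v' where w': "\<And>u. u \<ge> -h \<Longrightarrow> (fst (sol p) has_real_derivative w' u) (at u within {-h..})"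
    and v': "\<And>u. u \<ge> -h \<Longrightarrow> (snd (sol p) has_real_derivative v' u) (at u within {-h..})"
    and F: "\<And>u. u \<ge> 0 \<Longrightarrow> (w' u, v' u) = Fmap q j mu (seg (sol p) u)"
    using sol_has_derivative[OF p] by metis
  have ts: "t + s \<ge> -h" using t s by auto
  have seg_dr: "(dr h (fst (seg (sol p) t)) s, dr h (snd (seg (sol p) t)) s) = (w' (t+s), v' (t+s))"
    using dr_eq_shifted_derivative[OF h_pos t s] w'[OF ts] v'[OF ts] by (simp add: seg_def)
  show "t + s \<ge> 0 \<Longrightarrow> (dr h (fst (seg (sol p) t)) s, dr h (snd (seg (sol p) t)) s)
           = Fmap q j mu (seg (sol p) (t+s))"
    using seg_dr F by simp
  assume "t + s < 0"
  then have ts0: "t + s \<in> {-h..0}" using ts by simp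
  have "dr h (fst p) (t+s) = w' (t+s)" "dr h (snd p) (t+s) = v' (t+s)"
    using dr_eq_shifted_derivative[OF h_pos order_refl ts0] w'[OF ts] v'[OF ts] sol_init[OF p]
    by simp_all
  then show "(dr h (fst (seg (sol p) t)) s, dr h (snd (seg (sol p) t)) s)
           = (dr h (fst p) (t+s), dr h (snd p) (t+s))"
    using seg_dr by simp
qed

lemma snd_sol_has_derivative:
  assumes p: "p \<in> Xplus h q j mu" and u: "u \<ge> 0"
  shows "(snd (sol p) has_real_derivative j (seg (sol p) u) - mu * snd (sol p) u) (at u)"
proof -
  obtain w' v' where "\<And>u. u \<ge> -h \<Longrightarrow> (fst (sol p) has_real_derivative w' u) (at u within {-h..})"
    and v': "\<And>u. u \<ge> -h \<Longrightarrow> (snd (sol p) has_real_derivative v' u) (at u within {-h..})"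
    and F: "\<And>u. u \<ge> 0 \<Longrightarrow> (w' u, v' u) = Fmap q j mu (seg (sol p) u)"
    using sol_has_derivative[OF p] by metis
  have "(snd (sol p) has_real_derivative v' u) (at u within {-h..})"
    using v' u h_pos by simp
  then have "(snd (sol p) has_real_derivative v' u) (at u within {-h<..})"
    by (rule has_field_derivative_subset) auto
  moreover have "at u within {-h<..} = at u"
    using u h_pos by (intro at_within_open) auto
  moreover have "v' u = j (seg (sol p) u) - mu * snd (sol p) u"
    using F[OF u] by (simp add: Fmap_def seg_def)
  ultimately show ?thesis by simp
qed

section \<open>From C to C^1\<close>

lemma norm_Fmap_le:
  assumes "r \<in> Uplus h"
  shows "norm (Fmap q j mu r) \<le> M * \<bar>fst r 0\<bar> + \<bar>j r\<bar> + mu * \<bar>snd r 0\<bar>"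
proof -
  have "snd r 0 \<ge> 0" using assms h_pos by (simp add: Uplus_def)
  then have "\<bar>q (snd r 0)\<bar> \<le> M" using q_bounded Rm_neg by simp
  then have "\<bar>q (snd r 0) * fst r 0\<bar> \<le> M * \<bar>fst r 0\<bar>"
    unfolding abs_mult by (simp add: mult_right_mono)
  moreover have "\<bar>j r - mu * snd r 0\<bar> \<le> \<bar>j r\<bar> + mu * \<bar>snd r 0\<bar>"
    using abs_triangle_ineq4[of "j r" "mu * snd r 0"] mu_pos by (simp add: abs_mult)
  ultimately show ?thesis
    using norm_Pair_le[of "q (snd r 0) * fst r 0" "j r - mu * snd r 0"] by (simp add: Fmap_def)
qed

definition small_at :: "st \<Rightarrow> real \<Rightarrow> real \<Rightarrow> bool" where
  "small_at p a u \<longleftrightarrow>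
     \<bar>fst (sol p) u\<bar> \<le> a \<and> \<bar>snd (sol p) u\<bar> \<le> a \<and> \<bar>j (seg (sol p) u)\<bar> \<le> a"

lemma N0_seg_le_if_small:
  assumes p: "p \<in> Xplus h q j mu" and t: "t \<ge> 0"
    and small: "\<forall>u\<in>{t-h..t}. 0 \<le> u \<longrightarrow> small_at p a u"
    and init: "t < h \<Longrightarrow> N0 h p \<le> a"
  shows "N0 h (seg (sol p) t) \<le> 2 * a"
proof (rule N0_leI)
  show "0 \<le> h" using h_pos by simp
  show "\<forall>s\<in>{-h..0}. norm (fst (seg (sol p) t) s, snd (seg (sol p) t) s) \<le> 2 * a"
  proof
    fix s :: real assume s: "s \<in> {-h..0}"
    have "\<bar>fst (sol p) (t+s)\<bar> \<le> a \<and> \<bar>snd (sol p) (t+s)\<bar> \<le> a"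
    proof (cases "t + s \<ge> 0")
      case True
      then show ?thesis using small s by (simp add: small_at_def)
    next
      case False
      then have ts: "t + s \<in> {-h..0}" and "t < h" using s t by auto
      then show ?thesis
        using sol_init[OF p ts] abs_le_N0[OF Uplus_contst[OF h_pos] ts, of p] init p Xplus_subset_Uplus
        by auto
    qed
    then show "norm (fst (seg (sol p) t) s, snd (seg (sol p) t) s) \<le> 2 * a"
      using norm_Pair_le[of "fst (sol p) (t+s)" "snd (sol p) (t+s)"] by (simp add: seg_def)
  qed
qed

lemma norm_dr_seg_le_if_small:
  assumes p: "p \<in> Xplus h q j mu" and t: "t \<ge> 0" and s: "s \<in> {-h..0}"
    and small: "\<forall>u\<in>{t-h..t}. 0 \<le> u \<longrightarrow> small_at p a u"
    and init: "t < h \<Longrightarrow> N1 h p \<le> a"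
  shows "norm (dr h (fst (seg (sol p) t)) s, dr h (snd (seg (sol p) t)) s) \<le> (1 + M + mu) * a"
proof -
  have "small_at p a t" using small t h_pos by simp
  then have a: "a \<ge> 0" unfolding small_at_def by linarith
  show ?thesis
  proof (cases "t + s \<ge> 0")
    case True
    let ?r = "seg (sol p) (t+s)"
    have "small_at p a (t+s)" using small s True by simp
    then have "M * \<bar>fst ?r 0\<bar> + \<bar>j ?r\<bar> + mu * \<bar>snd ?r 0\<bar> \<le> M * a + a + mu * a"
      using M_nonneg mu_pos unfolding small_at_def sol_at_eq_seg_at_0
      by (intro add_mono mult_left_mono) auto
    then show ?thesis
      using dr_seg_sol(2)[OF p t s True] norm_Fmap_le[OF seg_sol_in_Uplus[OF p True]]
      by (simp add: algebra_simps)
  next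
    case False
    then have ts: "t + s \<in> {-h..0}" and "t < h" using s t by auto
    have "0 \<le> M * a + a * mu" using a M_nonneg mu_pos by simp
    then have "N1 h p \<le> (1 + M + mu) * a" using init \<open>t < h\<close> by (simp add: algebra_simps)
    then show ?thesis
      using dr_seg_sol(1)[OF p t s] False norm_dr_le_N1[OF h_pos _ ts, of p] p Xplus_subset_Uplus
      by (auto simp: Uplus_def)
  qed
qed

lemma N1_seg_le_if_small:
  assumes p: "p \<in> Xplus h q j mu" and t: "t \<ge> 0"
    and small: "\<forall>u\<in>{t-h..t}. 0 \<le> u \<longrightarrow> small_at p a u"
    and init: "t < h \<Longrightarrow> N1 h p \<le> a"
  shows "N1 h (seg (sol p) t) \<le> (3 + M + mu) * a"
proof -
  have "t < h \<Longrightarrow> N0 h p \<le> a"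
    using init Uplus_N0_le_N1[OF h_pos] p Xplus_subset_Uplus by fastforce
  then have "N0 h (seg (sol p) t) \<le> 2 * a"
    by (rule N0_seg_le_if_small[OF p t small])
  moreover have "N0 h (dr h (fst (seg (sol p) t)), dr h (snd (seg (sol p) t))) \<le> (1 + M + mu) * a"
    using norm_dr_seg_le_if_small[OF p t _ small init] h_pos by (intro N0_leI) auto
  ultimately show ?thesis by (simp add: N1_def algebra_simps)
qed

lemma stable_on_N0_if_small:
  assumes E: "E \<subseteq> Xplus h q j mu"
    and small: "\<And>\<eta>. \<eta> > 0 \<Longrightarrow> \<exists>\<delta>>0. \<forall>p\<in>E. N0 h p < \<delta> \<longrightarrow> (\<forall>u\<ge>0. small_at p \<eta> u)"
  shows "stable_on (N0 h) sol E"
  unfolding stable_on_def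
proof (intro allI impI)
  fix e :: real assume e: "e > 0"
  obtain \<delta> where \<delta>: "\<delta> > 0" "\<forall>p\<in>E. N0 h p < \<delta> \<longrightarrow> (\<forall>u\<ge>0. small_at p (e/3) u)"
    using small[of "e/3"] e by auto
  show "\<exists>\<delta>>0. \<forall>p\<in>E. N0 h p < \<delta> \<longrightarrow> (\<forall>t\<ge>0. N0 h (seg (sol p) t) < e)"
  proof (intro exI[of _ "min \<delta> (e/3)"] conjI ballI impI allI)
    show "min \<delta> (e/3) > 0" using \<delta> e by simp
    fix p and t :: real assume p: "p \<in> E" and p_small: "N0 h p < min \<delta> (e/3)" and t: "0 \<le> t"
    have "N0 h (seg (sol p) t) \<le> 2 * (e/3)"
      using N0_seg_le_if_small[of p t "e/3"] E p p_small t \<delta>(2) by auto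
    then show "N0 h (seg (sol p) t) < e" using e by simp
  qed
qed

lemma stable_on_N1_if_small:
  assumes E: "E \<subseteq> Xplus h q j mu"
    and small: "\<And>\<eta>. \<eta> > 0 \<Longrightarrow> \<exists>\<delta>>0. \<forall>p\<in>E. N1 h p < \<delta> \<longrightarrow> (\<forall>u\<ge>0. small_at p \<eta> u)"
  shows "stable_on (N1 h) sol E"
  unfolding stable_on_def
proof (intro allI impI)
  fix e :: real assume e: "e > 0"
  define \<eta> where "\<eta> = e / (4 + M + mu)"
  have \<eta>: "\<eta> > 0" and \<eta>_e: "(3 + M + mu) * \<eta> < e"
    using e M_nonneg mu_pos by (auto simp: \<eta>_def field_simps)
  obtain \<delta> where \<delta>: "\<delta> > 0" "\<forall>p\<in>E. N1 h p < \<delta> \<longrightarrow> (\<forall>u\<ge>0. small_at p \<eta> u)"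
    using small[OF \<eta>] by auto
  show "\<exists>\<delta>>0. \<forall>p\<in>E. N1 h p < \<delta> \<longrightarrow> (\<forall>t\<ge>0. N1 h (seg (sol p) t) < e)"
  proof (intro exI[of _ "min \<delta> \<eta>"] conjI ballI impI allI)
    show "min \<delta> \<eta> > 0" using \<delta> \<eta> by simp
    fix p and t :: real assume p: "p \<in> E" and p_small: "N1 h p < min \<delta> \<eta>" and t: "0 \<le> t"
    have "N1 h (seg (sol p) t) \<le> (3 + M + mu) * \<eta>"
      using N1_seg_le_if_small[of p t \<eta>] E p p_small t \<delta>(2) by auto
    then show "N1 h (seg (sol p) t) < e" using \<eta>_e by simp
  qed
qed

lemma conv_zero_if_eventually_small:
  assumes p: "p \<in> Xplus h q j mu"
    and small: "\<And>\<eta>. \<eta> > 0 \<Longrightarrow> eventually (small_at p \<eta>) at_top"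
  shows "conv_zero (N0 h) sol p \<and> conv_zero (N1 h) sol p"
proof -
  have bounds: "\<forall>\<^sub>F t in at_top. 0 \<le> N0 h (seg (sol p) t) \<and> N0 h (seg (sol p) t) \<le> N1 h (seg (sol p) t)"
    using eventually_ge_at_top[of 0]
    by eventually_elim (use Uplus_N0_nonneg Uplus_N0_le_N1 seg_sol_in_Uplus[OF p] h_pos in auto)
  have N1_lim: "((\<lambda>t. N1 h (seg (sol p) t)) \<longlongrightarrow> 0) at_top"
  proof (rule order_tendstoI)
    fix a :: real assume "a < 0"
    from bounds show "\<forall>\<^sub>F t in at_top. a < N1 h (seg (sol p) t)"
      by eventually_elim (use \<open>a < 0\<close> in auto)
  next
    fix e :: real assume e: "e > 0"
    define \<eta> where "\<eta> = e / (4 + M + mu)"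
    have \<eta>: "\<eta> > 0" and \<eta>_e: "(3 + M + mu) * \<eta> < e"
      using e M_nonneg mu_pos by (auto simp: \<eta>_def field_simps)
    obtain T where T: "\<forall>u\<ge>T. small_at p \<eta> u"
      using small[OF \<eta>] by (auto simp: eventually_at_top_linorder)
    have "N1 h (seg (sol p) t) < e" if t: "t \<ge> max T 0 + h" for t
    proof -
      have "0 \<le> t" "\<not> t < h" using t h_pos by auto
      moreover have "\<forall>u\<in>{t-h..t}. 0 \<le> u \<longrightarrow> small_at p \<eta> u" using t T by auto
      ultimately have "N1 h (seg (sol p) t) \<le> (3 + M + mu) * \<eta>"
        using N1_seg_le_if_small[OF p] by blast
      then show ?thesis using \<eta>_e by simp
    qed
    then show "\<forall>\<^sub>F t in at_top. N1 h (seg (sol p) t) < e"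
      by (auto simp: eventually_at_top_linorder)
  qed
  have "((\<lambda>t. N0 h (seg (sol p) t)) \<longlongrightarrow> 0) at_top"
    using bounds by (intro tendsto_sandwich[OF _ _ tendsto_const N1_lim]) (auto elim: eventually_mono)
  with N1_lim show ?thesis unfolding conv_zero_def by simp
qed

lemma small_at_if_N0_seg_small:
  assumes j_zst: "j zst = 0" and j_cont: "j_Ccont0 h j" and \<eta>: "\<eta> > 0"
  obtains d where "d > 0"
    "\<And>p u. p \<in> Xplus h q j mu \<Longrightarrow> 0 \<le> u \<Longrightarrow> N0 h (seg (sol p) u) < d \<Longrightarrow> small_at p \<eta> u"
proof -
  obtain dj where dj: "dj > 0" "\<forall>r\<in>Uplus h. N0 h r < dj \<longrightarrow> \<bar>j r - j zst\<bar> < \<eta>"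
    using j_cont \<eta> unfolding j_Ccont0_def by blast
  show thesis
  proof (rule that[of "min \<eta> dj"])
    show "min \<eta> dj > 0" using dj \<eta> by simp
    fix p u assume p: "p \<in> Xplus h q j mu" and u: "0 \<le> u" and "N0 h (seg (sol p) u) < min \<eta> dj"
    then show "small_at p \<eta> u"
      using abs_sol_le_N0_seg[OF p u] dj(2) seg_sol_in_Uplus[OF p u] j_zst
      unfolding small_at_def by fastforce
  qed
qed

lemma conv_zero_N1_if_conv_zero_N0:
  assumes j_zst: "j zst = 0" and j_cont: "j_Ccont0 h j"
    and p: "p \<in> Xplus h q j mu" and conv: "conv_zero (N0 h) sol p"
  shows "conv_zero (N1 h) sol p"
proof -
  have "eventually (small_at p \<eta>) at_top" if \<eta>: "\<eta> > 0" for \<eta>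
  proof -
    obtain d where d: "d > 0"
      "\<And>p u. p \<in> Xplus h q j mu \<Longrightarrow> 0 \<le> u \<Longrightarrow> N0 h (seg (sol p) u) < d \<Longrightarrow> small_at p \<eta> u"
      using small_at_if_N0_seg_small[OF j_zst j_cont \<eta>] by metis
    have "\<forall>\<^sub>F u in at_top. N0 h (seg (sol p) u) < d"
      using order_tendstoD(2)[OF conv[unfolded conv_zero_def] d(1)] .
    with eventually_ge_at_top[of 0] show ?thesis
      by eventually_elim (use d(2) p in auto)
  qed
  then show ?thesis using conv_zero_if_eventually_small[OF p] by blast
qed

lemma stable_on_N1_if_stable_on_N0:
  assumes E: "E \<subseteq> Xplus h q j mu" and j_zst: "j zst = 0" and j_cont: "j_Ccont0 h j"
    and stable: "stable_on (N0 h) sol E"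
  shows "stable_on (N1 h) sol E"
proof (rule stable_on_N1_if_small[OF E])
  fix \<eta> :: real assume \<eta>: "\<eta> > 0"
  obtain d where d: "d > 0"
    "\<And>p u. p \<in> Xplus h q j mu \<Longrightarrow> 0 \<le> u \<Longrightarrow> N0 h (seg (sol p) u) < d \<Longrightarrow> small_at p \<eta> u"
    using small_at_if_N0_seg_small[OF j_zst j_cont \<eta>] by metis
  obtain \<delta> where \<delta>: "\<delta> > 0" "\<forall>p\<in>E. N0 h p < \<delta> \<longrightarrow> (\<forall>t\<ge>0. N0 h (seg (sol p) t) < d)"
    using stable d(1) unfolding stable_on_def by blast
  show "\<exists>\<delta>>0. \<forall>p\<in>E. N1 h p < \<delta> \<longrightarrow> (\<forall>u\<ge>0. small_at p \<eta> u)"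
  proof (intro exI[of _ \<delta>] conjI ballI impI allI)
    fix p and u :: real assume p: "p \<in> E" and "N1 h p < \<delta>" and u: "0 \<le> u"
    then have "N0 h p < \<delta>"
      using Uplus_N0_le_N1[OF h_pos] E Xplus_subset_Uplus by fastforce
    then show "small_at p \<eta> u" using \<delta>(2) d(2) p E u by blast
  qed (rule \<delta>(1))
qed

lemma snd_sol_le_if_j_le:
  assumes p: "p \<in> Xplus h q j mu" and T: "T \<ge> 0"
    and j_le: "\<And>u. u \<ge> T \<Longrightarrow> j (seg (sol p) u) \<le> c" and u: "u \<ge> T"
  shows "snd (sol p) u \<le> c/mu + (snd (sol p) T - c/mu) * exp (-(mu*(u-T)))"
proof (rule linear_differential_inequality[OF mu_pos _ _ u])
  fix y assume y: "T \<le> y"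
  then show "(snd (sol p) has_real_derivative j (seg (sol p) y) - mu * snd (sol p) y) (at y)"
    using snd_sol_has_derivative[OF p] T by simp
  show "j (seg (sol p) y) - mu * snd (sol p) y \<le> c - mu * snd (sol p) y"
    using j_le[OF y] by simp
qed

lemma snd_sol_le_max_if_j_le:
  assumes p: "p \<in> Xplus h q j mu" and T: "T \<ge> 0"
    and j_le: "\<And>u. u \<ge> T \<Longrightarrow> j (seg (sol p) u) \<le> c" and u: "u \<ge> T"
  shows "snd (sol p) u \<le> max (snd (sol p) T) (c/mu)"
proof -
  define e where "e = exp (-(mu*(u-T)))"
  have e: "0 \<le> e" "e \<le> 1" using mu_pos u by (auto simp: e_def)
  have "snd (sol p) u \<le> c/mu + (snd (sol p) T - c/mu) * e"
    unfolding e_def by (rule snd_sol_le_if_j_le[OF p T j_le u])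
  also have "\<dots> = (1 - e) * (c/mu) + e * snd (sol p) T"
    by (simp add: algebra_simps add_divide_distrib[symmetric])
  also have "\<dots> \<le> (1 - e) * max (snd (sol p) T) (c/mu) + e * max (snd (sol p) T) (c/mu)"
    using e by (intro add_mono mult_left_mono) auto
  finally show ?thesis by (simp add: algebra_simps)
qed

lemma small_at_if_fst_seg_nonincreasing:
  assumes E: "E \<subseteq> Xplus h q j mu"
    and j_small: "\<forall>\<epsilon>>0. \<exists>\<delta>>0. \<forall>r\<in>Uplus h. n0 h (fst r) \<le> \<delta> \<longrightarrow> j r \<le> \<epsilon>"
    and nonincr: "\<forall>p\<in>E. \<forall>t\<ge>0. n0 h (fst (seg (sol p) t)) \<le> n0 h (fst p)"
    and \<eta>: "\<eta> > 0"
  shows "\<exists>\<delta>>0. \<forall>p\<in>E. N0 h p < \<delta> \<longrightarrow> (\<forall>u\<ge>0. small_at p \<eta> u)"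
proof -
  define c where "c = min \<eta> (mu * \<eta>)"
  have c: "0 < c" "c \<le> \<eta>" "c / mu \<le> \<eta>"
    using \<eta> mu_pos by (auto simp: c_def pos_divide_le_eq mult.commute)
  obtain dj where dj: "dj > 0" "\<forall>r\<in>Uplus h. n0 h (fst r) \<le> dj \<longrightarrow> j r \<le> c"
    using j_small c(1) by blast
  show ?thesis
  proof (intro exI[of _ "min dj \<eta>"] conjI ballI impI allI)
    show "0 < min dj \<eta>" using dj \<eta> by simp
    fix p and u :: real assume pE: "p \<in> E" and p_small: "N0 h p < min dj \<eta>" and u: "0 \<le> u"
    have p: "p \<in> Xplus h q j mu" using pE E by blast
    have p_cont: "contst h p" using p Xplus_subset_Uplus Uplus_contst[OF h_pos] by blast
    have "n0 h (fst p) \<le> N0 h p"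
      using n0_fst_le_N0[OF _ p_cont] h_pos by simp
    then have n0_seg: "n0 h (fst (seg (sol p) y)) < min dj \<eta>" if "y \<ge> 0" for y
      using nonincr pE that p_small by (meson order.trans le_less_trans)
    have j_seg: "0 \<le> j (seg (sol p) y) \<and> j (seg (sol p) y) \<le> c" if "y \<ge> 0" for y
      using dj(2) j_nonneg seg_sol_in_Uplus[OF p that] n0_seg[OF that] by auto
    have "snd (sol p) 0 = snd p 0" using sol_init(2)[OF p] h_pos by simp
    also have "\<dots> \<le> N0 h p" using abs_le_N0(2)[OF p_cont, of 0] h_pos by simp
    finally have v0: "snd (sol p) 0 \<le> \<eta>" using p_small by simp
    have "snd (sol p) u \<le> max (snd (sol p) 0) (c/mu)"
      by (rule snd_sol_le_max_if_j_le[OF p order_refl _ u]) (use j_seg in auto)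
    then have "snd (sol p) u \<le> \<eta>" using v0 c(3) by simp
    then show "small_at p \<eta> u"
      unfolding small_at_def
      using abs_fst_sol_le_n0_seg[OF p u] n0_seg[OF u] j_seg[OF u] c(2) snd_sol_nonneg[OF p u]
      by auto
  qed
qed

lemma stable_on_if_fst_seg_nonincreasing:
  assumes E: "E \<subseteq> Xplus h q j mu"
    and j_small: "\<forall>\<epsilon>>0. \<exists>\<delta>>0. \<forall>r\<in>Uplus h. n0 h (fst r) \<le> \<delta> \<longrightarrow> j r \<le> \<epsilon>"
    and nonincr: "\<forall>p\<in>E. \<forall>t\<ge>0. n0 h (fst (seg (sol p) t)) \<le> n0 h (fst p)"
  shows "stable_on (N0 h) sol E \<and> stable_on (N1 h) sol E"
proof
  note small = small_at_if_fst_seg_nonincreasing[OF E j_small nonincr]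
  show "stable_on (N0 h) sol E"
    using stable_on_N0_if_small[OF E small] .
  have "N0 h p \<le> N1 h p" if "p \<in> E" for p
    using Uplus_N0_le_N1[OF h_pos] E Xplus_subset_Uplus that by blast
  then have "\<exists>\<delta>>0. \<forall>p\<in>E. N1 h p < \<delta> \<longrightarrow> (\<forall>u\<ge>0. small_at p \<eta> u)" if "\<eta> > 0" for \<eta>
    using small[OF that] by (meson le_less_trans)
  then show "stable_on (N1 h) sol E"
    by (rule stable_on_N1_if_small[OF E])
qed

lemma eventually_j_seg_le_if_fst_tendsto_zero:
  assumes p: "p \<in> Xplus h q j mu"
    and j_small: "\<forall>\<epsilon>>0. \<exists>\<delta>>0. \<forall>r\<in>Uplus h. n0 h (fst r) \<le> \<delta> \<longrightarrow> j r \<le> \<epsilon>"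
    and w_lim: "(fst (sol p) \<longlongrightarrow> 0) at_top" and c: "c > 0"
  obtains T where "T \<ge> 0" "\<And>u. u \<ge> T \<Longrightarrow> j (seg (sol p) u) \<le> c"
proof -
  obtain d where d: "d > 0" "\<forall>r\<in>Uplus h. n0 h (fst r) \<le> d \<longrightarrow> j r \<le> c"
    using j_small c by blast
  have "\<forall>\<^sub>F u in at_top. \<bar>fst (sol p) u\<bar> < d"
    using tendstoD[OF w_lim d(1)] by (simp add: dist_real_def)
  then obtain T0 where T0: "\<And>u. u \<ge> T0 \<Longrightarrow> \<bar>fst (sol p) u\<bar> < d"
    by (auto simp: eventually_at_top_linorder)
  show thesis
  proof (rule that[of "max T0 0 + h"])
    show "max T0 0 + h \<ge> 0" using h_pos by simp
    fix u assume u: "u \<ge> max T0 0 + h"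
    have "\<bar>fst (seg (sol p) u) s\<bar> \<le> d" if "s \<in> {-h..0}" for s
    proof -
      have "u + s \<ge> T0" using that u by auto
      then show ?thesis using T0 by (fastforce simp: seg_def)
    qed
    then have "n0 h (fst (seg (sol p) u)) \<le> d"
      using h_pos by (intro n0_leI) auto
    then show "j (seg (sol p) u) \<le> c"
      using d(2) seg_sol_in_Uplus[OF p] u h_pos by simp
  qed
qed

lemma eventually_small_at_if_fst_tendsto_zero:
  assumes p: "p \<in> Xplus h q j mu"
    and j_small: "\<forall>\<epsilon>>0. \<exists>\<delta>>0. \<forall>r\<in>Uplus h. n0 h (fst r) \<le> \<delta> \<longrightarrow> j r \<le> \<epsilon>"
    and w_lim: "(fst (sol p) \<longlongrightarrow> 0) at_top" and \<eta>: "\<eta> > 0"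
  shows "eventually (small_at p \<eta>) at_top"
proof -
  define c where "c = min \<eta> (mu * \<eta> / 2)"
  have c: "0 < c" "c \<le> \<eta>" "c / mu < \<eta>"
    using \<eta> mu_pos by (auto simp: c_def min_def pos_divide_less_eq)
  obtain T where T: "T \<ge> 0" "\<And>u. u \<ge> T \<Longrightarrow> j (seg (sol p) u) \<le> c"
    using eventually_j_seg_le_if_fst_tendsto_zero[OF p j_small w_lim c(1)] by metis
  let ?bound = "\<lambda>u. c/mu + (snd (sol p) T - c/mu) * exp (-(mu*(u-T)))"
  have "(?bound \<longlongrightarrow> c/mu + (snd (sol p) T - c/mu) * 0) at_top"
    by (intro tendsto_intros exp_linear_decay mu_pos)
  then have "\<forall>\<^sub>F u in at_top. ?bound u < \<eta>"
    using c(3) by (intro order_tendstoD(2)) auto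
  moreover have "\<forall>\<^sub>F u in at_top. \<bar>fst (sol p) u\<bar> < \<eta>"
    using tendstoD[OF w_lim \<eta>] by (simp add: dist_real_def)
  moreover note eventually_ge_at_top[of T]
  ultimately show ?thesis
  proof eventually_elim
    case (elim u)
    then have "snd (sol p) u < \<eta>"
      using snd_sol_le_if_j_le[OF p T elim(3)] by simp
    moreover have "0 \<le> j (seg (sol p) u)"
      using j_nonneg seg_sol_in_Uplus[OF p] T(1) elim(3) by simp
    ultimately show "small_at p \<eta> u"
      unfolding small_at_def
      using elim(2) T(2)[OF elim(3)] c(2) snd_sol_nonneg[OF p] T(1) elim(3) by fastforce
  qed
qed

lemma conv_zero_if_fst_tendsto_zero:
  assumes p: "p \<in> Xplus h q j mu"
    and j_small: "\<forall>\<epsilon>>0. \<exists>\<delta>>0. \<forall>r\<in>Uplus h. n0 h (fst r) \<le> \<delta> \<longrightarrow> j r \<le> \<epsilon>"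
    and w_lim: "(fst (sol p) \<longlongrightarrow> 0) at_top"
  shows "conv_zero (N0 h) sol p \<and> conv_zero (N1 h) sol p"
  using conv_zero_if_eventually_small[OF p eventually_small_at_if_fst_tendsto_zero[OF p j_small w_lim]] .

end

theorem lemma9:
  fixes h Rm mu :: real and q :: "real \<Rightarrow> real" and j :: "st \<Rightarrow> real" and sol :: "st \<Rightarrow> st"
  assumes "h > 0" and "Rm < 0" and "mu > 0"
    and "q_hyps Rm q" and "j_hyps h Rm j"
    and "semiflow_hyps h Rm q j mu sol"
  defines "X \<equiv> Xplus h q j mu"
  shows
   \<comment> \<open>(a)\<close>
   "((j zst = 0 \<longleftrightarrow> Fmap q j mu zst = 0) \<and>
     (Fmap q j mu zst = 0 \<longleftrightarrow> zst \<in> X) \<and>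
     (zst \<in> X \<longleftrightarrow> is_sol h Rm q j mu zst zst))
  \<and> (j zst = 0 \<longrightarrow> X \<noteq> {})
  \<and> (j_Ccont0 h j \<longrightarrow> F_Ccont0 h q j mu)
  \<and> (j zst = 0 \<and> j_Ccont0 h j \<longrightarrow>
       (\<forall>p\<in>X. conv_zero (N0 h) sol p \<longrightarrow> conv_zero (N1 h) sol p)
     \<and> (glob_attr (N0 h) sol X \<longrightarrow> glob_attr (N1 h) sol X)
     \<and> (\<forall>E\<subseteq>X. stable_on (N0 h) sol E \<longrightarrow> stable_on (N1 h) sol E)
     \<and> (GAS (N0 h) sol X \<longrightarrow> GAS (N1 h) sol X))
  \<and> (j zst = 0 \<and> (\<forall>\<epsilon>>0. \<exists>\<delta>>0. \<forall>p\<in>Uplus h. n0 h (fst p) \<le> \<delta> \<longrightarrow> j p \<le> \<epsilon>) \<longrightarrow>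
       \<comment> \<open>(b)\<close>
       (\<forall>E. E \<subseteq> X \<and> zst \<in> E \<and>
            (\<forall>p\<in>E. \<forall>t\<ge>0. n0 h (fst (seg (sol p) t)) \<le> n0 h (fst p)) \<longrightarrow>
            stable_on (N0 h) sol E \<and> stable_on (N1 h) sol E)
       \<comment> \<open>(c)\<close>
     \<and> (\<forall>p\<in>X. (fst (sol p) \<longlongrightarrow> 0) at_top \<longrightarrow> conv_zero (N0 h) sol p \<and> conv_zero (N1 h) sol p)
     \<and> ((\<forall>p\<in>X. (fst (sol p) \<longlongrightarrow> 0) at_top) \<longrightarrow> glob_attr (N0 h) sol X \<and> glob_attr (N1 h) sol X))"
proof -
  obtain M where q_bounded: "\<forall>y>Rm. \<bar>q y\<bar> \<le> M"
    using assms(4) unfolding q_hyps_def by blast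
  have j_nonneg: "\<forall>p\<in>Uplus h. 0 \<le> j p"
    using assms(5) unfolding j_hyps_def by blast
  interpret delay_semiflow h Rm mu M q j sol
    using assms(1-3,6) q_bounded j_nonneg by unfold_locales
  show ?thesis
    using zst_in_Xplus_iff[OF h_pos, of q j mu] is_sol_zst_iff[OF h_pos Rm_neg, of q j mu]
      F_Ccont0_if_j_Ccont0[OF h_pos Rm_neg q_bounded, of j mu]
      conv_zero_N1_if_conv_zero_N0 stable_on_N1_if_stable_on_N0
      stable_on_if_fst_seg_nonincreasing conv_zero_if_fst_tendsto_zero
    unfolding X_def glob_attr_def GAS_def by (auto simp: Fmap_zst zero_prod_def)
qed

end
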